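(* Let $G_\sigma$ be an ordered graph on $\{1,\dots,p\}$. The following are equivalent: (a) $G_\sigma$ satisfies Property-B; (b) for every $1\le k\le j\le i\le p$, $L_{ik}L_{jk}D_k$ can be expressed as a polynomial in the entries of $L_I$ and $\widetilde D$ (with negative powers allowed for entries of $\widetilde D$), and in every term of the expansion of $L_{ik}L_{jk}D_k$ the power of every entry of $\widetilde D$ is $0$, $1$ or $-1$.
   Context: $G_\sigma$ has edge set $E_\sigma$. For $\Omega$ symmetric positive definite with $\Omega_{ij}=0$ for $i\ne j$, $(i,j)\notin E_\sigma$, write $\Omega=LDL^T$ (modified Cholesky: $L$ unit lower triangular, $D=\mathrm{diag}(D_1,\dots,D_p)$), $\widetilde D_1=D_1$, $\widetilde D_k=D_k/D_{k-1}$, so $D_k=\prod_{l\le k}\widetilde D_l$. $L_I=\{L_{ij}:i>j,(i,j)\in E_\sigma\}$ are independent parameters; for $i>j$, $(i,j)\notin E_\sigma$, the relation $L_{ij}=-\sum_{k<j}L_{ik}L_{jk}\prod_{l=k+1}^j\widetilde D_l^{-1}$ applied recursively expresses $L_{ij}$ as a polynomial (its expansion, like terms collected) in $L_I$ and $\widetilde D_1^{-1},\dots,\widetilde D_p^{-1}$; $L_{kk}=1$. $G_\sigma$ has Property-B if for every $i>j$ with $(i,j)\notin E_\sigma$, every $\widetilde D_k$ appears in every term of the expansion of $L_{ij}$ with exponent $0$ or $-1$. *)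

theory Defs
  imports Main "HOL-Library.Poly_Mapping"
begin

text \<open>Variables of the Laurent polynomial ring: the free entries L_ij (i>j, (i,j) in E)
  and the entries Dtilde_l of Dtilde.\<close>
datatype var = Lv nat nat | Dv nat

text \<open>Laurent polynomials with integer coefficients: a monomial assigns an integer
  exponent to each variable; a polynomial is a finitely supported map from monomials to
  coefficients (like terms collected).\<close>
type_synonym lpoly = "(var \<Rightarrow>\<^sub>0 int) \<Rightarrow>\<^sub>0 int"

definition mono_var :: "var \<Rightarrow> int \<Rightarrow> lpoly" where
  "mono_var v e = Poly_Mapping.single (Poly_Mapping.single v e) 1"

text \<open>Ordered graph on {1..p}: simple undirected graph, vertex order the natural one.\<close>
definition ordered_graph :: "nat \<Rightarrow> (nat \<times> nat) set \<Rightarrow> bool" where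
  "ordered_graph p E \<longleftrightarrow> E \<subseteq> {1..p} \<times> {1..p} \<and> sym E \<and> irrefl E"

function Lpoly :: "(nat \<times> nat) set \<Rightarrow> nat \<Rightarrow> nat \<Rightarrow> lpoly" where
  "Lpoly E i j =
     (if i = j then 1
      else if i < j then 0
      else if (i, j) \<in> E then mono_var (Lv i j) 1
      else - (\<Sum>k\<in>{1..<j}. Lpoly E i k * Lpoly E j k *
                             (\<Prod>l\<in>{k+1..j}. mono_var (Dv l) (-1))))"
  by auto
termination
  by (relation "measure (\<lambda>(E, i, j). j)") auto

definition Dpoly :: "nat \<Rightarrow> lpoly" where
  "Dpoly k = (\<Prod>l\<in>{1..k}. mono_var (Dv l) 1)"

definition property_B :: "nat \<Rightarrow> (nat \<times> nat) set \<Rightarrow> bool" where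
  "property_B p E \<longleftrightarrow>
     (\<forall>i j. 1 \<le> j \<and> j < i \<and> i \<le> p \<and> (i, j) \<notin> E \<longrightarrow>
        (\<forall>m \<in> Poly_Mapping.keys (Lpoly E i j). \<forall>l. Poly_Mapping.lookup m (Dv l) \<in> {0, -1}))"

end

theory Submission
  imports Defs "HOL-Library.Product_Lexorder"
begin

text \<open>Every monomial of \<open>L\<^sub>i\<^sub>k\<close> has nonpositive \<open>D\<^sub>l\<close>-exponents, supported on \<open>l \<le> k\<close>, while
  \<open>D\<^sub>k\<close> contributes exponent \<open>+1\<close> to each \<open>l \<le> k\<close>. Under Property-B the exponents of
  \<open>L\<^sub>i\<^sub>k\<close> are \<open>0\<close> or \<open>-1\<close>, so those of \<open>L\<^sub>i\<^sub>k L\<^sub>j\<^sub>k D\<^sub>k\<close> lie in \<open>{-1, 0, 1}\<close>. Conversely, if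
  some monomial of \<open>L\<^sub>i\<^sub>j\<close> has exponent \<open>e \<le> -2\<close> at \<open>D\<^sub>l\<close>, then, because the lowest-order parts
  of a product in an integral domain cannot cancel, \<open>L\<^sub>i\<^sub>j\<^sup>2\<close> has a monomial of exponent at
  most \<open>2e \<le> -4\<close>, and \<open>L\<^sub>i\<^sub>j L\<^sub>i\<^sub>j D\<^sub>j\<close> one of exponent at most \<open>-3\<close>.\<close>

declare Lpoly.simps[simp del]

fun var_key :: "var \<Rightarrow> nat \<times> nat \<times> nat" where
  "var_key (Lv a b) = (0, a, b)"
| "var_key (Dv a) = (1, a, 0)"

lemma inj_var_key: "inj var_key"
proof (rule injI)
  fix x y show "var_key x = var_key y \<Longrightarrow> x = y" by (cases x; cases y) auto
qed

text \<open>Any linear order on the variables makes the monomials a linearly ordered group,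
  which is what the library needs to make \<^typ>\<open>lpoly\<close> an integral domain.\<close>

instantiation var :: linorder
begin

definition less_eq_var :: "var \<Rightarrow> var \<Rightarrow> bool" where
  "less_eq_var x y \<longleftrightarrow> var_key x \<le> var_key y"

definition less_var :: "var \<Rightarrow> var \<Rightarrow> bool" where
  "less_var x y \<longleftrightarrow> var_key x < var_key y"

instance
  by standard (auto simp: less_eq_var_def less_var_def dest: injD[OF inj_var_key])

end

lemma keys_mult_subset:
  assumes "Poly_Mapping.keys f \<subseteq> S" "Poly_Mapping.keys g \<subseteq> S"
    and "\<And>a b. a \<in> S \<Longrightarrow> b \<in> S \<Longrightarrow> a + b \<in> S"
  shows "Poly_Mapping.keys (f * g) \<subseteq> S"
  using keys_mult[of f g] assms by blast

lemma keys_prod_subset: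
  fixes f :: "'i \<Rightarrow> 'm::comm_monoid_add \<Rightarrow>\<^sub>0 'b::comm_semiring_1"
  assumes "\<And>i. i \<in> A \<Longrightarrow> Poly_Mapping.keys (f i) \<subseteq> S" "0 \<in> S"
    and "\<And>a b. a \<in> S \<Longrightarrow> b \<in> S \<Longrightarrow> a + b \<in> S"
  shows "Poly_Mapping.keys (\<Prod>i\<in>A. f i) \<subseteq> S"
  using assms(1)
proof (induction A rule: infinite_finite_induct)
  case (insert x F)
  then show ?case by (simp add: keys_mult_subset assms(3))
qed (use assms(2) in simp_all)

lemma keys_sum_subset:
  assumes "\<And>i. i \<in> A \<Longrightarrow> Poly_Mapping.keys (f i) \<subseteq> S"
  shows "Poly_Mapping.keys (\<Sum>i\<in>A. f i) \<subseteq> S"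
  using keys_sum[of f A] assms by blast

lemma keys_mult_single_one:
  fixes f :: "'m::ab_group_add \<Rightarrow>\<^sub>0 'b::ring_1"
  shows "Poly_Mapping.keys (f * Poly_Mapping.single d 1) = (\<lambda>x. x + d) ` Poly_Mapping.keys f"
proof
  show "Poly_Mapping.keys (f * Poly_Mapping.single d 1) \<subseteq> (\<lambda>x. x + d) ` Poly_Mapping.keys f"
    using keys_mult[of f "Poly_Mapping.single d 1"] by auto
next
  have "f = f * Poly_Mapping.single d 1 * Poly_Mapping.single (- d) 1"
    by (simp add: mult.assoc mult_single)
  then have "Poly_Mapping.keys f \<subseteq> (\<lambda>x. x + - d) ` Poly_Mapping.keys (f * Poly_Mapping.single d 1)"
    using keys_mult[of "f * Poly_Mapping.single d 1" "Poly_Mapping.single (- d) 1"] by auto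
  then show "(\<lambda>x. x + d) ` Poly_Mapping.keys f \<subseteq> Poly_Mapping.keys (f * Poly_Mapping.single d 1)"
    by (auto simp: image_iff)
qed

subsection \<open>Lowest weight of a product\<close>

lemma obtain_lowest_weight_part:
  fixes f :: "'m \<Rightarrow>\<^sub>0 'b::ab_group_add" and w :: "'m \<Rightarrow> int"
  assumes "f \<noteq> 0"
  obtains f0 f1 e where "f = f0 + f1" "f0 \<noteq> 0"
    "\<forall>x \<in> Poly_Mapping.keys f. e \<le> w x"
    "\<forall>x \<in> Poly_Mapping.keys f0. w x = e" "\<forall>x \<in> Poly_Mapping.keys f1. e < w x"
proof -
  define e where "e = Min (w ` Poly_Mapping.keys f)"
  define A where "A = {x \<in> Poly_Mapping.keys f. w x = e}"
  define f0 where "f0 = (\<Sum>x\<in>A. Poly_Mapping.single x (Poly_Mapping.lookup f x))"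
  have keys_ne: "Poly_Mapping.keys f \<noteq> {}"
    using assms by simp
  have e_le: "\<forall>x \<in> Poly_Mapping.keys f. e \<le> w x"
    by (simp add: e_def)
  have "e \<in> w ` Poly_Mapping.keys f"
    unfolding e_def using keys_ne by (intro Min_in) auto
  then have "A \<noteq> {}"
    by (auto simp: A_def)
  have lookup_f0: "Poly_Mapping.lookup f0 x = (if x \<in> A then Poly_Mapping.lookup f x else 0)" for x
    unfolding f0_def by (simp add: A_def lookup_sum lookup_single when_def)
  then have keys_f0: "Poly_Mapping.keys f0 = A"
    by (auto simp: in_keys_iff A_def split: if_splits)
  have "e < w x" if x: "x \<in> Poly_Mapping.keys (f - f0)" for x
  proof -
    have "Poly_Mapping.lookup f x \<noteq> Poly_Mapping.lookup f0 x"
      using x by (simp add: in_keys_iff lookup_minus)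
    then have "x \<in> Poly_Mapping.keys f" "x \<notin> A"
      by (auto simp: lookup_f0 in_keys_iff split: if_splits)
    then show ?thesis
      using e_le by (force simp: A_def)
  qed
  moreover have "f = f0 + (f - f0)"
    by simp
  moreover have "f0 \<noteq> 0"
    using keys_f0 \<open>A \<noteq> {}\<close> by auto
  moreover have "\<forall>x \<in> Poly_Mapping.keys f0. w x = e"
    using keys_f0 by (simp add: A_def)
  ultimately show thesis
    using that e_le by blast
qed

lemma keys_mult_lowest_weight:
  fixes f g :: "'m::{ordered_cancel_comm_monoid_add, linorder} \<Rightarrow>\<^sub>0 'b::idom"
    and w :: "'m \<Rightarrow> int"
  assumes w_add: "\<And>a b. w (a + b) = w a + w b"
    and m: "m \<in> Poly_Mapping.keys f" and n: "n \<in> Poly_Mapping.keys g"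
  shows "\<exists>x \<in> Poly_Mapping.keys (f * g). w x \<le> w m + w n"
proof -
  have "f \<noteq> 0" "g \<noteq> 0"
    using m n by auto
  obtain f0 f1 e where f: "f = f0 + f1" "f0 \<noteq> 0" "\<forall>x \<in> Poly_Mapping.keys f. e \<le> w x"
    "\<forall>x \<in> Poly_Mapping.keys f0. w x = e" "\<forall>x \<in> Poly_Mapping.keys f1. e < w x"
    using obtain_lowest_weight_part[OF \<open>f \<noteq> 0\<close>, of w] by blast
  obtain g0 g1 e' where g: "g = g0 + g1" "g0 \<noteq> 0" "\<forall>x \<in> Poly_Mapping.keys g. e' \<le> w x"
    "\<forall>x \<in> Poly_Mapping.keys g0. w x = e'" "\<forall>x \<in> Poly_Mapping.keys g1. e' < w x"
    using obtain_lowest_weight_part[OF \<open>g \<noteq> 0\<close>, of w] by blast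
  have "f0 * g0 \<noteq> 0"
    using f(2) g(2) by simp
  then obtain x where x: "x \<in> Poly_Mapping.keys (f0 * g0)"
    by fastforce
  have weight_x: "w x = e + e'"
    using keys_mult[of f0 g0] x f(4) g(4) w_add by auto
  have "e + e' < w y" if "y \<in> Poly_Mapping.keys (f1 * g)" for y
    using keys_mult[of f1 g] that f(5) g(3) w_add by (fastforce intro: add_less_le_mono)
  moreover have "e + e' < w y" if "y \<in> Poly_Mapping.keys (f0 * g1)" for y
    using keys_mult[of f0 g1] that f(4) g(5) w_add by fastforce
  ultimately have "\<forall>y \<in> Poly_Mapping.keys (f1 * g + f0 * g1). e + e' < w y"
    using keys_add[of "f1 * g" "f0 * g1"] by blast
  then have "x \<notin> Poly_Mapping.keys (f1 * g + f0 * g1)"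
    using weight_x by auto
  moreover have "f * g = f0 * g0 + (f1 * g + f0 * g1)"
    using f(1) g(1) by (simp add: algebra_simps)
  ultimately have "x \<in> Poly_Mapping.keys (f * g)"
    using x by (simp add: in_keys_iff lookup_add)
  moreover have "w x \<le> w m + w n"
    using weight_x f(3) g(3) m n by (simp add: add_mono)
  ultimately show ?thesis
    by blast
qed

subsection \<open>Exponents of \<open>D\<close> in \<open>L\<^sub>i\<^sub>j\<close> and \<open>D\<^sub>k\<close>\<close>

definition Dexp :: "nat \<Rightarrow> var \<Rightarrow>\<^sub>0 int" where
  "Dexp k = (\<Sum>l\<in>{1..k}. Poly_Mapping.single (Dv l) 1)"

lemma Dpoly_eq_single_Dexp: "Dpoly k = Poly_Mapping.single (Dexp k) 1"
proof -
  have "(\<Prod>l\<in>A. Poly_Mapping.single (Poly_Mapping.single (Dv l) 1) (1::int)) =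
      Poly_Mapping.single (\<Sum>l\<in>A. Poly_Mapping.single (Dv l) 1) 1" for A :: "nat set"
    by (induction A rule: infinite_finite_induct) (simp_all add: mult_single)
  then show ?thesis
    by (simp add: Dpoly_def Dexp_def mono_var_def)
qed

lemma lookup_Dexp_Dv: "Poly_Mapping.lookup (Dexp k) (Dv l) = (if l \<in> {1..k} then 1 else 0)"
  by (simp add: Dexp_def lookup_sum lookup_single when_def)

definition D_exponents_in :: "nat \<Rightarrow> int set \<Rightarrow> (var \<Rightarrow>\<^sub>0 int) set" where
  "D_exponents_in j S =
     {m. \<forall>l. Poly_Mapping.lookup m (Dv l) \<in> (if l \<in> {1..j} then S else {0})}"

lemma lookup_Dv_in_D_exponents_in:
  "m \<in> D_exponents_in j S \<Longrightarrow> Poly_Mapping.lookup m (Dv l) \<in> (if l \<in> {1..j} then S else {0})"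
  by (simp add: D_exponents_in_def)

lemma D_exponents_in_mono:
  assumes "k \<le> j" "0 \<in> S"
  shows "D_exponents_in k S \<subseteq> D_exponents_in j S"
proof
  fix m assume m: "m \<in> D_exponents_in k S"
  have "Poly_Mapping.lookup m (Dv l) \<in> (if l \<in> {1..j} then S else {0})" for l
    using lookup_Dv_in_D_exponents_in[OF m, of l] assms by (cases "l \<in> {1..k}") auto
  then show "m \<in> D_exponents_in j S"
    by (simp add: D_exponents_in_def)
qed

lemma zero_Lv_in_D_exponents_in:
  assumes "0 \<in> S"
  shows "0 \<in> D_exponents_in j S" "Poly_Mapping.single (Lv a b) 1 \<in> D_exponents_in j S"
  using assms by (simp_all add: D_exponents_in_def lookup_single)

lemma add_in_D_exponents_nonpos:
  assumes a: "a \<in> D_exponents_in j {..0}" and b: "b \<in> D_exponents_in j {..0}"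
  shows "a + b \<in> D_exponents_in j {..0}"
proof -
  have "Poly_Mapping.lookup (a + b) (Dv l) \<in> (if l \<in> {1..j} then {..0} else {0})" for l
    using lookup_Dv_in_D_exponents_in[OF a, of l] lookup_Dv_in_D_exponents_in[OF b, of l]
    by (cases "l \<in> {1..j}") (auto simp: lookup_add)
  then show ?thesis
    by (simp add: D_exponents_in_def)
qed

lemma Lpoly_non_edge:
  assumes "j < i" "(i, j) \<notin> E"
  shows "Lpoly E i j = - (\<Sum>k\<in>{1..<j}. Lpoly E i k * Lpoly E j k *
    (\<Prod>l\<in>{k+1..j}. mono_var (Dv l) (-1)))"
  using assms by (subst Lpoly.simps) simp

lemma keys_Lpoly_D_exponents_nonpos: "Poly_Mapping.keys (Lpoly E i j) \<subseteq> D_exponents_in j {..0}"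
proof (induction E i j rule: Lpoly.induct)
  case (1 E i j)
  let ?N = "D_exponents_in j {..0}"
  show ?case
  proof (cases "i = j \<or> i < j \<or> (i, j) \<in> E")
    case True
    then have "Lpoly E i j \<in> {1, 0, mono_var (Lv i j) 1}"
      by (auto simp: Lpoly.simps[of E i j])
    then show ?thesis
      using zero_Lv_in_D_exponents_in[of "{..0}"] by (auto simp: mono_var_def)
  next
    case False
    have "Poly_Mapping.keys (Lpoly E i k * Lpoly E j k *
        (\<Prod>l\<in>{k+1..j}. mono_var (Dv l) (-1))) \<subseteq> ?N" if k: "k \<in> {1..<j}" for k
    proof -
      have "D_exponents_in k {..0} \<subseteq> ?N"
        using k by (intro D_exponents_in_mono) auto
      then have "Poly_Mapping.keys (Lpoly E i k) \<subseteq> ?N" "Poly_Mapping.keys (Lpoly E j k) \<subseteq> ?N"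
        using "1.IH" False k by blast+
      moreover have "Poly_Mapping.keys (\<Prod>l\<in>{k+1..j}. mono_var (Dv l) (-1)) \<subseteq> ?N"
      proof (rule keys_prod_subset)
        show "Poly_Mapping.keys (mono_var (Dv l) (-1)) \<subseteq> ?N" if "l \<in> {k+1..j}" for l
          using that k by (auto simp: mono_var_def D_exponents_in_def lookup_single when_def)
      qed (simp_all add: zero_Lv_in_D_exponents_in add_in_D_exponents_nonpos)
      ultimately show ?thesis
        by (simp add: keys_mult_subset add_in_D_exponents_nonpos)
    qed
    then have "Poly_Mapping.keys (\<Sum>k\<in>{1..<j}. Lpoly E i k * Lpoly E j k *
        (\<Prod>l\<in>{k+1..j}. mono_var (Dv l) (-1))) \<subseteq> ?N"
      by (rule keys_sum_subset)
    then show ?thesis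
      using False by (simp add: Lpoly_non_edge)
  qed
qed

lemma keys_Lpoly_D_exponents_property_B:
  assumes "property_B p E" "1 \<le> k" "k \<le> i" "i \<le> p"
  shows "Poly_Mapping.keys (Lpoly E i k) \<subseteq> D_exponents_in k {-1, 0}"
proof (cases "i = k \<or> (i, k) \<in> E")
  case True
  with \<open>k \<le> i\<close> have "Lpoly E i k \<in> {1, mono_var (Lv i k) 1}"
    by (auto simp: Lpoly.simps[of E i k])
  then show ?thesis
    using zero_Lv_in_D_exponents_in[of "{-1, 0}"] by (auto simp: mono_var_def)
next
  case False
  with assms have "1 \<le> k \<and> k < i \<and> i \<le> p \<and> (i, k) \<notin> E"
    by auto
  then have exps_B: "\<forall>l. Poly_Mapping.lookup m (Dv l) \<in> {0, -1}"
    if "m \<in> Poly_Mapping.keys (Lpoly E i k)" for m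
    using assms(1) that unfolding property_B_def by blast
  show ?thesis
  proof
    fix m assume m: "m \<in> Poly_Mapping.keys (Lpoly E i k)"
    then have nonpos: "m \<in> D_exponents_in k {..0}"
      using keys_Lpoly_D_exponents_nonpos by blast
    show "m \<in> D_exponents_in k {-1, 0}"
      unfolding D_exponents_in_def
    proof (intro CollectI allI)
      fix l
      show "Poly_Mapping.lookup m (Dv l) \<in> (if l \<in> {1..k} then {-1, 0} else {0})"
        using lookup_Dv_in_D_exponents_in[OF nonpos, of l] exps_B[OF m] by auto
    qed
  qed
qed

lemma D_exponents_Lpoly_Lpoly_Dpoly_if_property_B:
  assumes "property_B p E" "1 \<le> k" "k \<le> j" "j \<le> i" "i \<le> p"
    and m: "m \<in> Poly_Mapping.keys (Lpoly E i k * Lpoly E j k * Dpoly k)"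
  shows "Poly_Mapping.lookup m (Dv l) \<in> {-1, 0, 1}"
proof -
  obtain a b where ab: "a \<in> Poly_Mapping.keys (Lpoly E i k)" "b \<in> Poly_Mapping.keys (Lpoly E j k)"
    and m_eq: "m = a + b + Dexp k"
    using m keys_mult[of "Lpoly E i k" "Lpoly E j k"]
    by (auto simp: Dpoly_eq_single_Dexp keys_mult_single_one)
  have a: "a \<in> D_exponents_in k {-1, 0}"
    using ab(1) keys_Lpoly_D_exponents_property_B[OF assms(1,2), of i] assms(3-5) by auto
  have b: "b \<in> D_exponents_in k {-1, 0}"
    using ab(2) keys_Lpoly_D_exponents_property_B[OF assms(1,2), of j] assms(3-5) by auto
  show ?thesis
    using lookup_Dv_in_D_exponents_in[OF a, of l] lookup_Dv_in_D_exponents_in[OF b, of l]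
    by (auto simp: m_eq lookup_add lookup_Dexp_Dv split: if_splits)
qed

lemma low_D_exponent_Lpoly_Lpoly_Dpoly:
  assumes m: "m \<in> Poly_Mapping.keys (Lpoly E i j)" and low: "Poly_Mapping.lookup m (Dv l) \<le> -2"
  shows "\<exists>x \<in> Poly_Mapping.keys (Lpoly E i j * Lpoly E i j * Dpoly j). Poly_Mapping.lookup x (Dv l) \<le> -3"
proof -
  have l: "l \<in> {1..j}"
    using lookup_Dv_in_D_exponents_in[OF subsetD[OF keys_Lpoly_D_exponents_nonpos m], of l] low
    by (auto split: if_splits)
  obtain x where x: "x \<in> Poly_Mapping.keys (Lpoly E i j * Lpoly E i j)"
    and "Poly_Mapping.lookup x (Dv l) \<le> Poly_Mapping.lookup m (Dv l) + Poly_Mapping.lookup m (Dv l)"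
    using keys_mult_lowest_weight[of "\<lambda>x. Poly_Mapping.lookup x (Dv l)", OF _ m m]
    by (auto simp: lookup_add)
  then have "Poly_Mapping.lookup (x + Dexp j) (Dv l) \<le> -3"
    using low l by (simp add: lookup_add lookup_Dexp_Dv)
  moreover have "x + Dexp j \<in> Poly_Mapping.keys (Lpoly E i j * Lpoly E i j * Dpoly j)"
    using x by (simp add: Dpoly_eq_single_Dexp keys_mult_single_one)
  ultimately show ?thesis
    by blast
qed

lemma D_exponents_Lpoly_if_Lpoly_Lpoly_Dpoly:
  assumes exponents: "\<forall>x \<in> Poly_Mapping.keys (Lpoly E i j * Lpoly E i j * Dpoly j).
      Poly_Mapping.lookup x (Dv l) \<in> {-1, 0, 1}"
    and m: "m \<in> Poly_Mapping.keys (Lpoly E i j)"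
  shows "Poly_Mapping.lookup m (Dv l) \<in> {0, -1}"
proof -
  have "\<not> Poly_Mapping.lookup m (Dv l) \<le> -2"
  proof
    assume "Poly_Mapping.lookup m (Dv l) \<le> -2"
    then obtain x where x: "x \<in> Poly_Mapping.keys (Lpoly E i j * Lpoly E i j * Dpoly j)"
      and "Poly_Mapping.lookup x (Dv l) \<le> -3"
      using low_D_exponent_Lpoly_Lpoly_Dpoly[OF m] by blast
    moreover have "Poly_Mapping.lookup x (Dv l) \<in> {-1, 0, 1}"
      using exponents x by blast
    ultimately show False
      by auto
  qed
  moreover have "Poly_Mapping.lookup m (Dv l) \<le> 0"
    using lookup_Dv_in_D_exponents_in[OF subsetD[OF keys_Lpoly_D_exponents_nonpos m], of l]
    by (auto split: if_splits)
  ultimately show ?thesis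
    by auto
qed

theorem lemma5:
  fixes p :: nat and E :: "(nat \<times> nat) set"
  assumes "ordered_graph p E"
  shows "property_B p E \<longleftrightarrow>
    (\<forall>i j k. 1 \<le> k \<and> k \<le> j \<and> j \<le> i \<and> i \<le> p \<longrightarrow>
       (\<forall>m \<in> Poly_Mapping.keys (Lpoly E i k * Lpoly E j k * Dpoly k).
          \<forall>l. Poly_Mapping.lookup m (Dv l) \<in> {-1, 0, 1}))"
    (is "_ \<longleftrightarrow> ?exponents")
proof
  assume "property_B p E"
  then show ?exponents
    by (intro allI impI ballI, rule D_exponents_Lpoly_Lpoly_Dpoly_if_property_B) auto
next
  assume exponents: ?exponents
  show "property_B p E"
    unfolding property_B_def
  proof (intro allI impI ballI)
    fix i j m l
    assume "1 \<le> j \<and> j < i \<and> i \<le> p \<and> (i, j) \<notin> E"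
      and m: "m \<in> Poly_Mapping.keys (Lpoly E i j)"
    then have "1 \<le> j \<and> j \<le> i \<and> i \<le> i \<and> i \<le> p"
      by auto
    then have "\<forall>x \<in> Poly_Mapping.keys (Lpoly E i j * Lpoly E i j * Dpoly j).
        Poly_Mapping.lookup x (Dv l) \<in> {-1, 0, 1}"
      using exponents[rule_format, where i = i and j = i and k = j] by blast
    then show "Poly_Mapping.lookup m (Dv l) \<in> {0, -1}"
      using m by (rule D_exponents_Lpoly_if_Lpoly_Lpoly_Dpoly)
  qed
qed

end
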